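(* Let $U$ be a finite set and let $d$ be an $\alpha$-relaxed semi-metric distance on $U$ for some $\alpha \ge 1$. Then for any two disjoint subsets $X, Y \subseteq U$, $$\alpha\,(|X|-1)\,d(X,Y) \;\ge\; |Y|\, d(X).$$
   Context: An $\alpha$-relaxed semi-metric distance on $U$ (with $\alpha\ge 1$) is a function $d:U\times U\to\mathbb{R}_{\ge 0}$ with $d(u,v)=d(v,u)$, $d(u,u)=0$, satisfying the relaxed triangle inequality $d(u,v)\le \alpha\,(d(v,w)+d(w,u))$ for all $u,v,w\in U$. For $S\subseteq U$, $d(S)=\sum_{\{u,v\}\subseteq S,\,u\neq v} d(u,v)$ (sum over unordered pairs). For disjoint $S,T\subseteq U$, $d(S,T)=d(S\cup T)-d(S)-d(T)=\sum_{s\in S,\,t\in T} d(s,t)$. *)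

theory Defs
  imports Complex_Main
begin

definition relaxed_semimetric :: "'a set \<Rightarrow> real \<Rightarrow> ('a \<Rightarrow> 'a \<Rightarrow> real) \<Rightarrow> bool" where
  "relaxed_semimetric U \<alpha> d \<longleftrightarrow> \<alpha> \<ge> 1 \<and>
     (\<forall>u\<in>U. \<forall>v\<in>U. d u v \<ge> 0 \<and> d u v = d v u) \<and>
     (\<forall>u\<in>U. d u u = 0) \<and>
     (\<forall>u\<in>U. \<forall>v\<in>U. \<forall>w\<in>U. d u v \<le> \<alpha> * (d v w + d w u))"

definition dset :: "('a \<Rightarrow> 'a \<Rightarrow> real) \<Rightarrow> 'a set \<Rightarrow> real" where
  "dset d S = (\<Sum>p\<in>{p. \<exists>u v. p = {u, v} \<and> u \<in> S \<and> v \<in> S \<and> u \<noteq> v}. (THE q. \<exists>u v. p = {u,v} \<and> u \<noteq> v \<and> q = d u v))"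

definition dbetween :: "('a \<Rightarrow> 'a \<Rightarrow> real) \<Rightarrow> 'a set \<Rightarrow> 'a set \<Rightarrow> real" where
  "dbetween d S T = dset d (S \<union> T) - dset d S - dset d T"

end

theory Submission
  imports Defs
begin

text \<open>Fix a point y in Y. Bounding every pair distance in X through y by the relaxed triangle
inequality and summing over all ordered pairs gives d(X) \<le> \<alpha> (|X| - 1) \<Sum>x\<in>X. d(x,y);
summing this over y in Y gives the claim, since the cross distance d(X,Y) is the sum of d(x,y)
over X \<times> Y.\<close>

lemma dset_pair_value:
  assumes "d b a = d a b" and "a \<noteq> b"
  shows "(THE q. \<exists>u v. {a, b} = {u, v} \<and> u \<noteq> v \<and> q = d u v) = d a b"
proof (rule the_equality)
  fix q assume "\<exists>u v. {a, b} = {u, v} \<and> u \<noteq> v \<and> q = d u v"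
  then obtain u v where "{a, b} = {u, v}" "q = d u v" by blast
  then show "q = d a b" using assms by (auto simp: doubleton_eq_iff)
qed (use assms in blast)

lemma two_dset_eq_sum_off_diagonal:
  assumes fin: "finite S" and sym: "\<And>u v. u \<in> S \<Longrightarrow> v \<in> S \<Longrightarrow> d u v = d v u"
  shows "2 * dset d S = (\<Sum>u\<in>S. \<Sum>v\<in>S - {u}. d u v)"
proof -
  define D where "D = Sigma S (\<lambda>u. S - {u})"
  define P where "P = {p. \<exists>u v. p = {u, v} \<and> u \<in> S \<and> v \<in> S \<and> u \<noteq> v}"
  define F where "F = (\<lambda>p. THE q. \<exists>u v. p = {u, v} \<and> u \<noteq> v \<and> q = d u v)"
  have image: "(\<lambda>(u, v). {u, v}) ` D = P" unfolding D_def P_def by auto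
  have "(\<Sum>u\<in>S. \<Sum>v\<in>S - {u}. d u v) = (\<Sum>(u, v)\<in>D. d u v)"
    unfolding D_def using fin by (simp add: sum.Sigma)
  also have "\<dots> = (\<Sum>p\<in>P. \<Sum>x\<in>{x\<in>D. (\<lambda>(u, v). {u, v}) x = p}. case x of (u, v) \<Rightarrow> d u v)"
    unfolding image[symmetric] using fin by (intro sum.image_gen) (simp add: D_def)
  also have "\<dots> = (\<Sum>p\<in>P. 2 * F p)"
  proof (rule sum.cong[OF refl])
    fix p assume "p \<in> P"
    then obtain a b where p: "p = {a, b}" "a \<in> S" "b \<in> S" "a \<noteq> b" unfolding P_def by blast
    have "{x\<in>D. (\<lambda>(u, v). {u, v}) x = p} = {(a, b), (b, a)}"
      using p unfolding D_def by (auto simp: doubleton_eq_iff)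
    then show "(\<Sum>x\<in>{x\<in>D. (\<lambda>(u, v). {u, v}) x = p}. case x of (u, v) \<Rightarrow> d u v) = 2 * F p"
      using p sym dset_pair_value[of d b a] by (simp add: F_def)
  qed
  also have "\<dots> = 2 * dset d S"
    unfolding dset_def P_def F_def by (simp add: sum_distrib_left)
  finally show ?thesis by simp
qed

lemma two_dset_eq_sum:
  assumes "finite S" and "\<And>u v. u \<in> S \<Longrightarrow> v \<in> S \<Longrightarrow> d u v = d v u"
    and "\<And>u. u \<in> S \<Longrightarrow> d u u = 0"
  shows "2 * dset d S = (\<Sum>u\<in>S. \<Sum>v\<in>S. d u v)"
  using two_dset_eq_sum_off_diagonal[OF assms(1,2)] assms(1,3) by (simp add: sum.remove)

lemma dbetween_eq_sum:
  assumes fin: "finite S" "finite T" and disj: "S \<inter> T = {}"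
    and sym: "\<And>u v. u \<in> S \<union> T \<Longrightarrow> v \<in> S \<union> T \<Longrightarrow> d u v = d v u"
    and diag: "\<And>u. u \<in> S \<union> T \<Longrightarrow> d u u = 0"
  shows "dbetween d S T = (\<Sum>s\<in>S. \<Sum>t\<in>T. d s t)"
proof -
  have swap: "(\<Sum>t\<in>T. \<Sum>s\<in>S. d t s) = (\<Sum>s\<in>S. \<Sum>t\<in>T. d s t)"
    using sym by (subst sum.swap) (auto intro!: sum.cong)
  have "2 * dset d (S \<union> T) = (\<Sum>u\<in>S \<union> T. \<Sum>v\<in>S \<union> T. d u v)"
    using fin sym diag by (intro two_dset_eq_sum) auto
  also have "\<dots> = (\<Sum>u\<in>S. \<Sum>v\<in>S. d u v) + 2 * (\<Sum>s\<in>S. \<Sum>t\<in>T. d s t) + (\<Sum>u\<in>T. \<Sum>v\<in>T. d u v)"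
    using fin disj swap by (simp add: sum.union_disjoint sum.distrib)
  finally show ?thesis
    using two_dset_eq_sum[of S d] two_dset_eq_sum[of T d] fin sym diag
    unfolding dbetween_def by simp
qed

lemma sum_off_diagonal:
  fixes f :: "'a \<Rightarrow> real"
  assumes "finite X"
  shows "(\<Sum>u\<in>X. \<Sum>v\<in>X - {u}. f v) = (real (card X) - 1) * sum f X"
proof -
  have "(\<Sum>u\<in>X. \<Sum>v\<in>X - {u}. f v) = (\<Sum>u\<in>X. sum f X - f u)"
    using assms by (intro sum.cong) (simp_all add: sum_diff1)
  then show ?thesis by (simp add: sum_subtractf left_diff_distrib)
qed

lemma dset_le_sum_dist_to_point:
  assumes "finite X" "relaxed_semimetric U \<alpha> d" "X \<subseteq> U" "y \<in> U"
  shows "dset d X \<le> \<alpha> * (real (card X) - 1) * (\<Sum>x\<in>X. d x y)"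
proof -
  note rs = assms(2)[unfolded relaxed_semimetric_def]
  have sym: "d u v = d v u" if "u \<in> U" "v \<in> U" for u v using rs that by blast
  have "2 * dset d X = (\<Sum>u\<in>X. \<Sum>v\<in>X - {u}. d u v)"
    using assms sym by (intro two_dset_eq_sum_off_diagonal) auto
  also have "\<dots> \<le> (\<Sum>u\<in>X. \<Sum>v\<in>X - {u}. \<alpha> * (d v y + d u y))"
    using rs assms(3,4) sym by (intro sum_mono) (metis Diff_subset subset_iff)
  also have "\<dots> = \<alpha> * ((\<Sum>u\<in>X. \<Sum>v\<in>X - {u}. d v y) + (\<Sum>u\<in>X. \<Sum>v\<in>X - {u}. d u y))"
    by (simp only: sum_distrib_left distrib_left sum.distrib)
  also have "(\<Sum>u\<in>X. \<Sum>v\<in>X - {u}. d u y) = (real (card X) - 1) * (\<Sum>x\<in>X. d x y)"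
  proof -
    have "real (card (X - {u})) = real (card X) - 1" if "u \<in> X" for u
      using assms(1) that card_gt_0_iff[of X] by (auto simp: of_nat_diff Suc_le_eq)
    then show ?thesis by (simp add: sum_distrib_left)
  qed
  also have "(\<Sum>u\<in>X. \<Sum>v\<in>X - {u}. d v y) = (real (card X) - 1) * (\<Sum>x\<in>X. d x y)"
    by (rule sum_off_diagonal[OF assms(1)])
  finally show ?thesis by simp
qed

theorem lemma1:
  fixes U :: "'a set" and d :: "'a \<Rightarrow> 'a \<Rightarrow> real" and \<alpha> :: real and X Y :: "'a set"
  assumes "finite U"
    and "relaxed_semimetric U \<alpha> d"
    and "X \<subseteq> U" and "Y \<subseteq> U" and "X \<inter> Y = {}"
  shows "\<alpha> * (real (card X) - 1) * dbetween d X Y \<ge> real (card Y) * dset d X"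
proof -
  have fin: "finite X" "finite Y" using assms(1,3,4) finite_subset by auto
  have "real (card Y) * dset d X = (\<Sum>y\<in>Y. dset d X)" by simp
  also have "\<dots> \<le> (\<Sum>y\<in>Y. \<alpha> * (real (card X) - 1) * (\<Sum>x\<in>X. d x y))"
    using assms fin by (intro sum_mono dset_le_sum_dist_to_point[of X U]) auto
  also have "\<dots> = \<alpha> * (real (card X) - 1) * (\<Sum>x\<in>X. \<Sum>y\<in>Y. d x y)"
    by (simp add: sum_distrib_left sum.swap[of _ Y])
  also have "(\<Sum>x\<in>X. \<Sum>y\<in>Y. d x y) = dbetween d X Y"
    using assms fin unfolding relaxed_semimetric_def
    by (intro dbetween_eq_sum[symmetric]) blast+
  finally show ?thesis .
qed

end
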